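(* Fix $\eta\in[0,1)$. Let $\mathbf{Struct}^{\mathrm{fib}}_\eta$ be the full subcategory of $\mathbf{Struct}_\eta$ whose objects $\mathcal M=(X,\mathcal A,\mu,\mu^{\otimes2},R,I,\Pi_R,G,E_0,\eta)$ satisfy: $\{r\}\in\mathcal A$ and $\Pi_R^{-1}(\{r\})\in\mathcal A$ for every $r\in R$, and either (R-fin) $R$ is finite, or (R-ctbl) $R$ is countable, $\mathcal A$ is a $\sigma$-algebra and $\mu$ is $\sigma$-additive. Let $\mathbf{Struct}^{\mathrm{id}}_\eta$ be the full subcategory of $\mathbf{Struct}_\eta$ of objects with $R=X$, $I=\varnothing$, $\Pi_R=\mathrm{id}_X$. For an object $\mathcal M$ of $\mathbf{Struct}^{\mathrm{fib}}_\eta$ let $\mathcal M|_R=(R,\ \mathcal A\cap\mathcal P(R),\ \mu|_R,\ \mu^{\otimes2}|_{R\times R},\ R,\ \varnothing,\ \mathrm{id}_R,\ G\cap(R\times R),\ \mu(R),\ \eta)$. Then $\mathcal M|_R$ is an object of $\mathbf{Struct}^{\mathrm{id}}_\eta$ (in particular $\mu(R)>0$), every morphism $\phi:\mathcal M\to\mathcal M'$ in $\mathbf{Struct}^{\mathrm{fib}}_\eta$ satisfies $\phi(R)\subseteq R'$ and its restriction $\phi|_R:R\to R'$ is a morphism $\mathcal M|_R\to\mathcal M'|_{R'}$, and the assignment $\mathcal M\mapsto\mathcal M|_R$, $\phi\mapsto\phi|_R$ is a functor $\mathbf{Struct}^{\mathrm{fib}}_\eta\to\mathbf{Struct}^{\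mathrm{id}}_\eta$.
   Context: An admissible structural model is a tuple $(X,\mathcal A,\mu,\mu^{\otimes2},R,I,\Pi_R,G,E_0,\eta)$ with $X$ nonempty, $\mathcal A\subseteq\mathcal P(X)$ an algebra, $\mu:\mathcal A\to[0,\infty)$ finitely additive, $\mu^{\otimes2}$ finitely additive on the algebra $\mathcal A\otimes\mathcal A$ generated by rectangles with $\mu^{\otimes2}(B_1\times B_2)=\mu(B_1)\mu(B_2)$, $R,I\in\mathcal A$ disjoint, $\Pi_R:X\to R$ a map, $G\in\mathcal A\otimes\mathcal A$, $E_0>0$, $\eta\in[0,1]$, satisfying: Axiom I: $\Pi_R\circ\Pi_R=\Pi_R$, $\Pi_R|_R=\mathrm{id}_R$, $\Pi_R^{-1}(B)\in\mathcal A$ for $B\in\mathcal A$, $B\subseteq R$; Axiom II: $G$ reflexive, symmetric, $G\circ G=G$ (relational composition); Axiom III: $\mu(R)+\mu(I)=E_0$, $\mu(\Pi_R^{-1}(B))=\mu(B)$ for $B\in\mathcal A$, $B\subseteq R$, and for all $B\in\mathcal A$, $\mu^{\otimes2}((B\times X)\cap G)=\mu(B)+\eta\,\mu^{\otimes2}((\Pi_R^{-1}(B)\times X)\cap G)$. A morphism $\phi:\mathcal M\to\mathcal M'$ between admissible structural models $\mathcal M=(X,\mathcal A,\mu,\mu^{\otimes2},R,I,\Pi_R,G,E_0,\eta)$ and $\mathcal M'=(X',\mathcal A',\mu',\mu'^{\otimes2},R',I',\Pi_{R'},G',E_0',\eta)$ is a map $\phi:X\to X'$ such that: (M1) $\phi^{-1}(B')\in\mathcal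 A$ for all $B'\in\mathcal A'$ and $(\phi\times\phi)^{-1}(S')\in\mathcal A\otimes\mathcal A$ for all $S'\in\mathcal A'\otimes\mathcal A'$; (M2) $\phi\circ\Pi_R=\Pi_{R'}\circ\phi$; (M3) $(x,y)\in G$ implies $(\phi(x),\phi(y))\in G'$; (M4) $\mu(\phi^{-1}(B'))=\mu'(B')$ for all $B'\in\mathcal A'$ and $\mu^{\otimes2}((\phi\times\phi)^{-1}(S'))=\mu'^{\otimes2}(S')$ for all $S'\in\mathcal A'\otimes\mathcal A'$. $\mathbf{Struct}_\eta$ is the category of admissible structural models with parameter $\eta$ and these morphisms. *)

theory Defs
  imports "HOL-Analysis.Sigma_Algebra" "HOL-Library.FuncSet"
begin

(* An admissible structural model, carried by a type 'a.
   Functions (mu, mu2, Pi) are total HOL functions; only their values on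
   the algebra / on the carrier are meaningful. *)
record 'a smodel =
  carrier :: "'a set"
  alg     :: "'a set set"
  mu      :: "'a set \<Rightarrow> real"
  mu2     :: "('a \<times> 'a) set \<Rightarrow> real"
  Rset    :: "'a set"
  Iset    :: "'a set"
  Pi      :: "'a \<Rightarrow> 'a"
  Grel    :: "('a \<times> 'a) set"
  E0      :: real
  eta     :: real

definition gen_algebra :: "'b set \<Rightarrow> 'b set set \<Rightarrow> 'b set set" where
  "gen_algebra \<Omega> S = \<Inter>{M. algebra \<Omega> M \<and> S \<subseteq> M}"

definition prod_alg :: "'a set \<Rightarrow> 'a set set \<Rightarrow> ('a \<times> 'a) set set" where
  "prod_alg X A = gen_algebra (X \<times> X) {B1 \<times> B2 | B1 B2. B1 \<in> A \<and> B2 \<in> A}"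

definition fin_additive :: "'b set set \<Rightarrow> ('b set \<Rightarrow> real) \<Rightarrow> bool" where
  "fin_additive A m \<longleftrightarrow> (\<forall>B\<in>A. 0 \<le> m B) \<and>
     (\<forall>B1\<in>A. \<forall>B2\<in>A. B1 \<inter> B2 = {} \<longrightarrow> m (B1 \<union> B2) = m B1 + m B2)"

definition sigma_additive :: "'b set set \<Rightarrow> ('b set \<Rightarrow> real) \<Rightarrow> bool" where
  "sigma_additive A m \<longleftrightarrow> (\<forall>F :: nat \<Rightarrow> 'b set. range F \<subseteq> A \<longrightarrow> disjoint_family F
      \<longrightarrow> (\<Union>i. F i) \<in> A \<longrightarrow> (\<lambda>i. m (F i)) sums m (\<Union>i. F i))"

definition admissible :: "'a smodel \<Rightarrow> bool" where
  "admissible M \<longleftrightarrow>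
     (let X = carrier M; A = alg M; \<mu> = mu M; \<mu>2 = mu2 M; R = Rset M; I = Iset M;
          P = Pi M; G = Grel M; AA = prod_alg X A in
       X \<noteq> {} \<and> algebra X A \<and> fin_additive A \<mu> \<and> fin_additive AA \<mu>2 \<and>
       (\<forall>B1\<in>A. \<forall>B2\<in>A. \<mu>2 (B1 \<times> B2) = \<mu> B1 * \<mu> B2) \<and>
       R \<in> A \<and> I \<in> A \<and> R \<inter> I = {} \<and>
       (\<forall>x\<in>X. P x \<in> R) \<and> G \<in> AA \<and> E0 M > 0 \<and> 0 \<le> eta M \<and> eta M \<le> 1 \<and>
       \<comment> \<open>Axiom I\<close>
       (\<forall>x\<in>X. P (P x) = P x) \<and> (\<forall>x\<in>R. P x = x) \<and>
       (\<forall>B\<in>A. B \<subseteq> R \<longrightarrow> {x\<in>X. P x \<in> B} \<in> A) \<and>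
       \<comment> \<open>Axiom II\<close>
       (\<forall>x\<in>X. (x, x) \<in> G) \<and> sym G \<and> G O G = G \<and>
       \<comment> \<open>Axiom III\<close>
       \<mu> R + \<mu> I = E0 M \<and>
       (\<forall>B\<in>A. B \<subseteq> R \<longrightarrow> \<mu> {x\<in>X. P x \<in> B} = \<mu> B) \<and>
       (\<forall>B\<in>A. \<mu>2 ((B \<times> X) \<inter> G) = \<mu> B + eta M * \<mu>2 (({x\<in>X. P x \<in> B} \<times> X) \<inter> G)))"

definition is_morphism :: "'a smodel \<Rightarrow> 'b smodel \<Rightarrow> ('a \<Rightarrow> 'b) \<Rightarrow> bool" where
  "is_morphism M M' \<phi> \<longleftrightarrow>
     admissible M \<and> admissible M' \<and> eta M = eta M' \<and>
     (\<forall>x\<in>carrier M. \<phi> x \<in> carrier M') \<and>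
     \<comment> \<open>M1\<close>
     (\<forall>B'\<in>alg M'. {x\<in>carrier M. \<phi> x \<in> B'} \<in> alg M) \<and>
     (\<forall>S'\<in>prod_alg (carrier M') (alg M').
        {p\<in>carrier M \<times> carrier M. (\<phi> (fst p), \<phi> (snd p)) \<in> S'} \<in> prod_alg (carrier M) (alg M)) \<and>
     \<comment> \<open>M2\<close>
     (\<forall>x\<in>carrier M. \<phi> (Pi M x) = Pi M' (\<phi> x)) \<and>
     \<comment> \<open>M3\<close>
     (\<forall>x y. (x, y) \<in> Grel M \<longrightarrow> (\<phi> x, \<phi> y) \<in> Grel M') \<and>
     \<comment> \<open>M4\<close>
     (\<forall>B'\<in>alg M'. mu M {x\<in>carrier M. \<phi> x \<in> B'} = mu M' B') \<and>
     (\<forall>S'\<in>prod_alg (carrier M') (alg M').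
        mu2 M {p\<in>carrier M \<times> carrier M. (\<phi> (fst p), \<phi> (snd p)) \<in> S'} = mu2 M' S')"

definition struct_obj :: "real \<Rightarrow> 'a smodel \<Rightarrow> bool" where
  "struct_obj \<eta> M \<longleftrightarrow> admissible M \<and> eta M = \<eta>"

definition fib_obj :: "real \<Rightarrow> 'a smodel \<Rightarrow> bool" where
  "fib_obj \<eta> M \<longleftrightarrow> struct_obj \<eta> M \<and>
     (\<forall>r\<in>Rset M. {r} \<in> alg M \<and> {x\<in>carrier M. Pi M x = r} \<in> alg M) \<and>
     (finite (Rset M) \<or>
      (countable (Rset M) \<and> sigma_algebra (carrier M) (alg M) \<and> sigma_additive (alg M) (mu M)))"

definition id_obj :: "real \<Rightarrow> 'a smodel \<Rightarrow> bool" where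
  "id_obj \<eta> M \<longleftrightarrow> struct_obj \<eta> M \<and> Rset M = carrier M \<and> Iset M = {} \<and>
     (\<forall>x\<in>carrier M. Pi M x = x)"

definition restrR :: "'a smodel \<Rightarrow> 'a smodel" where
  "restrR M = \<lparr> carrier = Rset M, alg = {B \<in> alg M. B \<subseteq> Rset M},
     mu = mu M, mu2 = mu2 M, Rset = Rset M, Iset = {}, Pi = (\<lambda>x. x),
     Grel = Grel M \<inter> (Rset M \<times> Rset M), E0 = mu M (Rset M), eta = eta M \<rparr>"

end

theory Submission
  imports Defs
begin

(* Because \<Pi>_R maps X into R, \<Pi>_R\<^sup>-\<^sup>1(R) = X, and Axiom III yields \<mu>(X) = \<mu>(R): the
   complement X - R, and with it I, is \<mu>-null, so \<mu>(R) = E_0 > 0.  A product with a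
   null factor is \<mu>\<otimes>\<mu>-null, so intersecting with R or R \<times> R, or enlarging B \<subseteq> R to
   \<Pi>_R\<^sup>-\<^sup>1(B), changes no measure; this carries Axiom III and the measure preservation
   of morphisms over to the restrictions.  Morphisms commute with the retractions and
   therefore map R, the fixed point set of \<Pi>_R, into R'. *)

lemma algebra_gen_algebra:
  assumes "S \<subseteq> Pow \<Omega>"
  shows "algebra \<Omega> (gen_algebra \<Omega> S)"
proof -
  have "Pow \<Omega> \<in> {M. algebra \<Omega> M \<and> S \<subseteq> M}"
    using assms by (auto simp: algebra_iff_Un)
  then show ?thesis
    unfolding algebra_iff_Un gen_algebra_def by (auto simp: algebra_iff_Un)
qed

lemma gen_algebra_superset: "S \<subseteq> gen_algebra \<Omega> S"
  unfolding gen_algebra_def by blast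

lemma gen_algebra_least: "algebra \<Omega> M \<Longrightarrow> S \<subseteq> M \<Longrightarrow> gen_algebra \<Omega> S \<subseteq> M"
  unfolding gen_algebra_def by blast

lemma gen_algebra_trace:
  assumes "S \<subseteq> Pow \<Omega>" and "T \<subseteq> \<Omega>" and "E \<in> gen_algebra \<Omega> S"
  shows "E \<inter> T \<in> gen_algebra T ((\<lambda>B. B \<inter> T) ` S)"
proof -
  let ?N = "{E. E \<subseteq> \<Omega> \<and> E \<inter> T \<in> gen_algebra T ((\<lambda>B. B \<inter> T) ` S)}"
  interpret T: algebra T "gen_algebra T ((\<lambda>B. B \<inter> T) ` S)"
    by (rule algebra_gen_algebra) blast
  have "algebra \<Omega> ?N"
    unfolding algebra_iff_Un
  proof (intro conjI ballI)
    fix E assume "E \<in> ?N"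
    then have "T - E \<inter> T \<in> gen_algebra T ((\<lambda>B. B \<inter> T) ` S)" by blast
    moreover have "(\<Omega> - E) \<inter> T = T - E \<inter> T" using assms(2) by blast
    ultimately show "\<Omega> - E \<in> ?N" by simp
  next
    fix E F assume "E \<in> ?N" "F \<in> ?N"
    then have "E \<inter> T \<union> F \<inter> T \<in> gen_algebra T ((\<lambda>B. B \<inter> T) ` S)" by blast
    moreover have "(E \<union> F) \<inter> T = E \<inter> T \<union> F \<inter> T" by blast
    ultimately show "E \<union> F \<in> ?N" using \<open>E \<in> ?N\<close> \<open>F \<in> ?N\<close> by simp
  next
    show "?N \<subseteq> Pow \<Omega>" by blast
    show "{} \<in> ?N" by simp
  qed
  moreover have "S \<subseteq> ?N"
    using assms(1) gen_algebra_superset by fastforce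
  ultimately have "gen_algebra \<Omega> S \<subseteq> ?N"
    by (rule gen_algebra_least)
  then show ?thesis
    using assms(3) by blast
qed

lemma (in algebra) algebra_subsets:
  assumes "A \<in> M"
  shows "algebra A {B \<in> M. B \<subseteq> A}"
  unfolding algebra_iff_Un using assms by auto

lemma algebra_prod_alg:
  assumes "algebra X A"
  shows "algebra (X \<times> X) (prod_alg X A)"
proof -
  have "A \<subseteq> Pow X"
    using assms by (simp add: algebra_iff_Un)
  then show ?thesis
    unfolding prod_alg_def by (intro algebra_gen_algebra) blast
qed

lemma Times_in_prod_alg: "B1 \<in> A \<Longrightarrow> B2 \<in> A \<Longrightarrow> B1 \<times> B2 \<in> prod_alg X A"
  unfolding prod_alg_def by (rule subsetD[OF gen_algebra_superset]) blast

lemma prod_alg_subsets_subset: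
  assumes "algebra X A" and "R \<in> A"
  shows "prod_alg R {B \<in> A. B \<subseteq> R} \<subseteq> prod_alg X A"
proof -
  interpret AA: algebra "X \<times> X" "prod_alg X A"
    using assms(1) by (rule algebra_prod_alg)
  let ?rects = "{B1 \<times> B2 |B1 B2. B1 \<in> {B \<in> A. B \<subseteq> R} \<and> B2 \<in> {B \<in> A. B \<subseteq> R}}"
  have "algebra (R \<times> R) {S \<in> prod_alg X A. S \<subseteq> R \<times> R}"
    using assms(2) Times_in_prod_alg by (intro AA.algebra_subsets)
  moreover have "?rects \<subseteq> {S \<in> prod_alg X A. S \<subseteq> R \<times> R}"
    using Times_in_prod_alg by blast
  ultimately have "gen_algebra (R \<times> R) ?rects \<subseteq> {S \<in> prod_alg X A. S \<subseteq> R \<times> R}"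
    by (rule gen_algebra_least)
  then show ?thesis
    unfolding prod_alg_def[of R] by blast
qed

lemma Int_square_in_prod_alg_subsets:
  assumes "algebra X A" and "R \<in> A" and "S \<in> prod_alg X A"
  shows "S \<inter> (R \<times> R) \<in> prod_alg R {B \<in> A. B \<subseteq> R}"
proof -
  interpret A: algebra X A by fact
  let ?AR = "{B \<in> A. B \<subseteq> R}"
  let ?rects = "{B1 \<times> B2 |B1 B2. B1 \<in> A \<and> B2 \<in> A}"
  have "S \<inter> (R \<times> R) \<in> gen_algebra (R \<times> R) ((\<lambda>B. B \<inter> (R \<times> R)) ` ?rects)"
    using assms A.space_closed
    by (intro gen_algebra_trace[where \<Omega> = "X \<times> X"]) (auto simp: prod_alg_def)
  moreover have "algebra (R \<times> R) (prod_alg R ?AR)"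
    using A.algebra_subsets[OF assms(2)] by (rule algebra_prod_alg)
  moreover have "(\<lambda>B. B \<inter> (R \<times> R)) ` ?rects \<subseteq> prod_alg R ?AR"
  proof clarify
    fix B1 B2 assume "B1 \<in> A" "B2 \<in> A"
    then have "(B1 \<inter> R) \<times> (B2 \<inter> R) \<in> prod_alg R ?AR"
      using assms(2) by (intro Times_in_prod_alg) auto
    moreover have "B1 \<times> B2 \<inter> R \<times> R = (B1 \<inter> R) \<times> (B2 \<inter> R)" by blast
    ultimately show "B1 \<times> B2 \<inter> R \<times> R \<in> prod_alg R ?AR" by simp
  qed
  ultimately show ?thesis
    using gen_algebra_least[of "R \<times> R" "prod_alg R ?AR"] by blast
qed

lemma fin_additive_nonneg: "fin_additive M m \<Longrightarrow> a \<in> M \<Longrightarrow> 0 \<le> m a"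
  unfolding fin_additive_def by blast

lemma fin_additive_subset: "fin_additive M m \<Longrightarrow> M' \<subseteq> M \<Longrightarrow> fin_additive M' m"
  unfolding fin_additive_def by blast

lemma fin_additive_Diff:
  assumes "algebra \<Omega> M" "fin_additive M m" "a \<in> M" "b \<in> M" "a \<subseteq> b"
  shows "m b = m a + m (b - a)"
proof -
  interpret algebra \<Omega> M by fact
  have "m (a \<union> (b - a)) = m a + m (b - a)"
    using assms unfolding fin_additive_def by blast
  moreover have "a \<union> (b - a) = b" using assms(5) by blast
  ultimately show ?thesis by simp
qed

lemma fin_additive_empty:
  assumes "algebra \<Omega> M" "fin_additive M m"
  shows "m {} = 0"
proof -
  interpret algebra \<Omega> M by fact
  show ?thesis using fin_additive_Diff[OF assms, of "{}" "{}"] by simp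
qed

lemma fin_additive_mono:
  assumes "algebra \<Omega> M" "fin_additive M m" "a \<in> M" "b \<in> M" "a \<subseteq> b"
  shows "m a \<le> m b"
proof -
  interpret algebra \<Omega> M by fact
  have "0 \<le> m (b - a)"
    using assms by (intro fin_additive_nonneg[OF assms(2)]) auto
  then show ?thesis
    using fin_additive_Diff[OF assms] by simp
qed

lemma fin_additive_Un_le:
  assumes "algebra \<Omega> M" "fin_additive M m" "a \<in> M" "b \<in> M"
  shows "m (a \<union> b) \<le> m a + m b"
proof -
  interpret algebra \<Omega> M by fact
  have "m (a \<union> b) = m a + m (a \<union> b - a)"
    using fin_additive_Diff[OF assms(1,2), of a "a \<union> b"] assms by blast
  moreover have "m (a \<union> b - a) \<le> m b"
    using assms by (intro fin_additive_mono[OF assms(1,2)]) auto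
  ultimately show ?thesis by simp
qed

lemma fin_additive_eq_if_null_Diff:
  assumes "algebra \<Omega> M" "fin_additive M m" "a \<in> M" "b \<in> M" "a \<subseteq> b"
    and "N \<in> M" "m N = 0" "b - a \<subseteq> N"
  shows "m a = m b"
proof -
  interpret algebra \<Omega> M by fact
  have "m (b - a) \<le> m N"
    using assms by (intro fin_additive_mono[OF assms(1,2)]) auto
  moreover have "0 \<le> m (b - a)"
    using assms by (intro fin_additive_nonneg[OF assms(2)]) auto
  ultimately show ?thesis
    using fin_additive_Diff[OF assms(1-5)] assms(7) by simp
qed

lemma relcomp_Int_square:
  assumes "\<forall>x\<in>R. (x, x) \<in> G" and "G O G \<subseteq> G"
  shows "(G \<inter> R \<times> R) O (G \<inter> R \<times> R) = G \<inter> R \<times> R"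
  using assms by blast

locale admissible_model =
  fixes M :: "'a smodel"
  assumes admissible: "admissible M"
begin

lemma
  shows carrier_nonempty: "carrier M \<noteq> {}"
    and mu_fin_additive: "fin_additive (alg M) (mu M)"
    and mu2_fin_additive: "fin_additive (prod_alg (carrier M) (alg M)) (mu2 M)"
    and mu2_Times: "\<And>B1 B2. B1 \<in> alg M \<Longrightarrow> B2 \<in> alg M \<Longrightarrow> mu2 M (B1 \<times> B2) = mu M B1 * mu M B2"
    and Rset_in_alg: "Rset M \<in> alg M"
    and Iset_in_alg: "Iset M \<in> alg M"
    and Rset_Iset_disjoint: "Rset M \<inter> Iset M = {}"
    and Pi_in_Rset: "\<And>x. x \<in> carrier M \<Longrightarrow> Pi M x \<in> Rset M"
    and Grel_in_prod_alg: "Grel M \<in> prod_alg (carrier M) (alg M)"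
    and E0_pos: "0 < E0 M"
    and eta_nonneg: "0 \<le> eta M"
    and eta_le_1: "eta M \<le> 1"
    and Pi_fixes_Rset: "\<And>x. x \<in> Rset M \<Longrightarrow> Pi M x = x"
    and Pi_preimage_in_alg:
      "\<And>B. B \<in> alg M \<Longrightarrow> B \<subseteq> Rset M \<Longrightarrow> {x \<in> carrier M. Pi M x \<in> B} \<in> alg M"
    and Grel_refl: "\<And>x. x \<in> carrier M \<Longrightarrow> (x, x) \<in> Grel M"
    and Grel_sym: "sym (Grel M)"
    and Grel_relcomp: "Grel M O Grel M = Grel M"
    and mu_Rset_Iset: "mu M (Rset M) + mu M (Iset M) = E0 M"
    and mu_Pi_preimage:
      "\<And>B. B \<in> alg M \<Longrightarrow> B \<subseteq> Rset M \<Longrightarrow> mu M {x \<in> carrier M. Pi M x \<in> B} = mu M B"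
    and mu2_Grel_section: "\<And>B. B \<in> alg M \<Longrightarrow>
      mu2 M ((B \<times> carrier M) \<inter> Grel M) =
        mu M B + eta M * mu2 M (({x \<in> carrier M. Pi M x \<in> B} \<times> carrier M) \<inter> Grel M)"
  using admissible unfolding admissible_def Let_def by simp_all

sublocale A: algebra "carrier M" "alg M"
  using admissible unfolding admissible_def Let_def by simp

sublocale AA: algebra "carrier M \<times> carrier M" "prod_alg (carrier M) (alg M)"
  using A.algebra_axioms by (rule algebra_prod_alg)

lemma Rset_subset: "Rset M \<subseteq> carrier M"
  using Rset_in_alg A.space_closed by blast

lemma mu_complement_Rset: "mu M (carrier M - Rset M) = 0"
proof -
  have "{x \<in> carrier M. Pi M x \<in> Rset M} = carrier M"
    using Pi_in_Rset by blast
  then have "mu M (carrier M) = mu M (Rset M)"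
    using mu_Pi_preimage[OF Rset_in_alg] by simp
  then show ?thesis
    using fin_additive_Diff[OF A.algebra_axioms mu_fin_additive Rset_in_alg A.top Rset_subset]
    by simp
qed

lemma mu_Rset_pos: "0 < mu M (Rset M)"
proof -
  have "Iset M \<subseteq> carrier M - Rset M"
    using Iset_in_alg Rset_Iset_disjoint A.space_closed by blast
  then have "mu M (Iset M) \<le> 0"
    using fin_additive_mono[OF A.algebra_axioms mu_fin_additive Iset_in_alg, of "carrier M - Rset M"]
      mu_complement_Rset Rset_in_alg by auto
  then show ?thesis
    using mu_Rset_Iset E0_pos by simp
qed

lemma mu_Int_Rset: "B \<in> alg M \<Longrightarrow> mu M (B \<inter> Rset M) = mu M B"
  using Rset_in_alg mu_complement_Rset A.sets_into_space
  by (intro fin_additive_eq_if_null_Diff[OF A.algebra_axioms mu_fin_additive,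
        where N = "carrier M - Rset M"]) auto

lemma mu2_null_strip:
  assumes "N \<in> alg M" and "mu M N = 0"
  shows "mu2 M (N \<times> carrier M \<union> carrier M \<times> N) = 0"
proof -
  have "N \<times> carrier M \<union> carrier M \<times> N \<in> prod_alg (carrier M) (alg M)"
    using assms(1) by (intro AA.Un Times_in_prod_alg A.top)
  then have "0 \<le> mu2 M (N \<times> carrier M \<union> carrier M \<times> N)"
    by (rule fin_additive_nonneg[OF mu2_fin_additive])
  moreover have "mu2 M (N \<times> carrier M \<union> carrier M \<times> N) \<le> mu2 M (N \<times> carrier M) + mu2 M (carrier M \<times> N)"
    using assms(1) by (intro fin_additive_Un_le[OF AA.algebra_axioms mu2_fin_additive]
        Times_in_prod_alg A.top)
  moreover have "mu2 M (N \<times> carrier M) + mu2 M (carrier M \<times> N) = 0"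
    using assms by (simp add: mu2_Times)
  ultimately show ?thesis by linarith
qed

lemma mu2_eq_if_Diff_in_null_strip:
  assumes "S \<in> prod_alg (carrier M) (alg M)" "T \<in> prod_alg (carrier M) (alg M)" "S \<subseteq> T"
    and "N \<in> alg M" "mu M N = 0" "T - S \<subseteq> N \<times> carrier M \<union> carrier M \<times> N"
  shows "mu2 M S = mu2 M T"
  using assms mu2_null_strip[OF assms(4,5)]
  by (intro fin_additive_eq_if_null_Diff[OF AA.algebra_axioms mu2_fin_additive])
    (auto intro: Times_in_prod_alg)

lemma mu2_Int_Rset_square:
  assumes "T \<in> prod_alg (carrier M) (alg M)"
  shows "mu2 M (T \<inter> Rset M \<times> Rset M) = mu2 M T"
proof (rule mu2_eq_if_Diff_in_null_strip)
  show "T \<inter> Rset M \<times> Rset M \<in> prod_alg (carrier M) (alg M)"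
    using assms Rset_in_alg by (intro AA.Int Times_in_prod_alg)
  show "T - T \<inter> Rset M \<times> Rset M
      \<subseteq> (carrier M - Rset M) \<times> carrier M \<union> carrier M \<times> (carrier M - Rset M)"
    using assms AA.space_closed by blast
qed (use assms Rset_in_alg mu_complement_Rset in auto)

lemma mu2_Grel_section_Rset:
  assumes B: "B \<in> alg M" "B \<subseteq> Rset M"
  shows "mu2 M ((B \<times> Rset M) \<inter> Grel M) = mu M B + eta M * mu2 M ((B \<times> Rset M) \<inter> Grel M)"
proof -
  let ?G = "Grel M" and ?X = "carrier M" and ?PB = "{x \<in> carrier M. Pi M x \<in> B}"
  have PB: "?PB \<in> alg M" and B_PB: "B \<subseteq> ?PB"
    using B Pi_preimage_in_alg Pi_fixes_Rset Rset_subset by auto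
  have sections: "(B \<times> ?X) \<inter> ?G \<in> prod_alg ?X (alg M)" "(?PB \<times> ?X) \<inter> ?G \<in> prod_alg ?X (alg M)"
    using B PB by (auto intro: AA.Int Times_in_prod_alg Grel_in_prod_alg)
  have "(B \<times> Rset M) \<inter> ?G = (B \<times> ?X) \<inter> ?G \<inter> Rset M \<times> Rset M"
    using B Rset_subset by blast
  then have restrict: "mu2 M ((B \<times> Rset M) \<inter> ?G) = mu2 M ((B \<times> ?X) \<inter> ?G)"
    using mu2_Int_Rset_square[OF sections(1)] by simp
  have "mu M ?PB = mu M B + mu M (?PB - B)"
    by (rule fin_additive_Diff[OF A.algebra_axioms mu_fin_additive B(1) PB B_PB])
  then have "mu M (?PB - B) = 0"
    using mu_Pi_preimage[OF B] by simp
  then have enlarge: "mu2 M ((B \<times> ?X) \<inter> ?G) = mu2 M ((?PB \<times> ?X) \<inter> ?G)"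
    using sections B_PB PB B(1)
    by (intro mu2_eq_if_Diff_in_null_strip[where N = "?PB - B"]) auto
  show ?thesis
    using mu2_Grel_section[OF B(1)] unfolding restrict enlarge[symmetric] .
qed

lemma restrR_admissible: "admissible (restrR M)"
proof -
  let ?R = "Rset M" and ?G = "Grel M \<inter> Rset M \<times> Rset M"
  let ?AR = "{B \<in> alg M. B \<subseteq> ?R}"
  have on_Rset: "{x \<in> ?R. x \<in> B} = B" if "B \<subseteq> ?R" for B
    using that by blast
  show ?thesis
    unfolding admissible_def Let_def restrR_def smodel.simps
  proof (intro conjI ballI allI impI)
    show "?R \<noteq> {}" using carrier_nonempty Pi_in_Rset by blast
    show "algebra ?R ?AR" using Rset_in_alg by (rule A.algebra_subsets)
    show "fin_additive ?AR (mu M)" using mu_fin_additive by (rule fin_additive_subset) blast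
    show "fin_additive (prod_alg ?R ?AR) (mu2 M)"
      using mu2_fin_additive prod_alg_subsets_subset[OF A.algebra_axioms Rset_in_alg]
      by (rule fin_additive_subset)
    show "?G \<in> prod_alg ?R ?AR"
      by (rule Int_square_in_prod_alg_subsets[OF A.algebra_axioms Rset_in_alg Grel_in_prod_alg])
    show "?G O ?G = ?G"
      using Grel_refl Rset_subset Grel_relcomp by (intro relcomp_Int_square) auto
    show "sym ?G"
      using Grel_sym unfolding sym_def by blast
  next
    fix B assume B: "B \<in> ?AR"
    then have "(B \<times> ?R) \<inter> ?G = (B \<times> ?R) \<inter> Grel M" by blast
    then show "mu2 M ((B \<times> ?R) \<inter> ?G) = mu M B + eta M * mu2 M (({x \<in> ?R. x \<in> B} \<times> ?R) \<inter> ?G)"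
      using B mu2_Grel_section_Rset[of B] by (simp add: on_Rset)
  qed (use Rset_in_alg Rset_subset mu_Rset_pos eta_nonneg eta_le_1 Grel_refl mu2_Times
         fin_additive_empty[OF A.algebra_axioms mu_fin_additive] in \<open>auto simp: on_Rset\<close>)
qed

end

lemma morphism_image_Rset:
  assumes "is_morphism M M' \<phi>"
  shows "\<phi> ` Rset M \<subseteq> Rset M'"
proof clarify
  interpret admissible_model M using assms by (simp add: is_morphism_def admissible_model_def)
  interpret M': admissible_model M' using assms by (simp add: is_morphism_def admissible_model_def)
  fix x assume x: "x \<in> Rset M"
  then have "\<phi> x = \<phi> (Pi M x)" by (simp add: Pi_fixes_Rset)
  also have "\<dots> = Pi M' (\<phi> x)"
    using assms x Rset_subset by (auto simp: is_morphism_def)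
  also have "\<dots> \<in> Rset M'"
    using assms x Rset_subset by (intro M'.Pi_in_Rset) (auto simp: is_morphism_def)
  finally show "\<phi> x \<in> Rset M'" .
qed

lemma restrR_morphism_preimage:
  assumes "is_morphism M M' \<phi>" and "B' \<in> alg M'"
  shows "{x \<in> Rset M. restrict \<phi> (Rset M) x \<in> B'} \<in> alg M"
    and "mu M {x \<in> Rset M. restrict \<phi> (Rset M) x \<in> B'} = mu M' B'"
proof -
  interpret admissible_model M using assms by (simp add: is_morphism_def admissible_model_def)
  let ?P = "{x \<in> carrier M. \<phi> x \<in> B'}"
  have "?P \<in> alg M" "mu M ?P = mu M' B'"
    using assms by (auto simp: is_morphism_def)
  moreover have "{x \<in> Rset M. restrict \<phi> (Rset M) x \<in> B'} = ?P \<inter> Rset M"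
    using Rset_subset by auto
  ultimately show "{x \<in> Rset M. restrict \<phi> (Rset M) x \<in> B'} \<in> alg M"
    and "mu M {x \<in> Rset M. restrict \<phi> (Rset M) x \<in> B'} = mu M' B'"
    using Rset_in_alg mu_Int_Rset by auto
qed

lemma restrR_morphism_pair_preimage:
  assumes "is_morphism M M' \<phi>" and "S' \<in> prod_alg (carrier M') (alg M')"
  defines "f \<equiv> restrict \<phi> (Rset M)"
  shows "{p \<in> Rset M \<times> Rset M. (f (fst p), f (snd p)) \<in> S'} \<in> prod_alg (Rset M) {B \<in> alg M. B \<subseteq> Rset M}"
    and "mu2 M {p \<in> Rset M \<times> Rset M. (f (fst p), f (snd p)) \<in> S'} = mu2 M' S'"
proof -
  interpret admissible_model M using assms by (simp add: is_morphism_def admissible_model_def)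
  let ?P = "{p \<in> carrier M \<times> carrier M. (\<phi> (fst p), \<phi> (snd p)) \<in> S'}"
  have "?P \<in> prod_alg (carrier M) (alg M)" "mu2 M ?P = mu2 M' S'"
    using assms by (auto simp: is_morphism_def)
  moreover have "{p \<in> Rset M \<times> Rset M. (f (fst p), f (snd p)) \<in> S'} = ?P \<inter> Rset M \<times> Rset M"
    using Rset_subset by (auto simp: f_def)
  ultimately show "{p \<in> Rset M \<times> Rset M. (f (fst p), f (snd p)) \<in> S'}
        \<in> prod_alg (Rset M) {B \<in> alg M. B \<subseteq> Rset M}"
    and "mu2 M {p \<in> Rset M \<times> Rset M. (f (fst p), f (snd p)) \<in> S'} = mu2 M' S'"
    using Int_square_in_prod_alg_subsets[OF A.algebra_axioms Rset_in_alg] mu2_Int_Rset_square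
    by auto
qed

lemma restrR_morphism:
  assumes "is_morphism M M' \<phi>"
  shows "is_morphism (restrR M) (restrR M') (restrict \<phi> (Rset M))"
proof -
  interpret admissible_model M using assms by (simp add: is_morphism_def admissible_model_def)
  interpret M': admissible_model M' using assms by (simp add: is_morphism_def admissible_model_def)
  have "S' \<in> prod_alg (carrier M') (alg M')" if "S' \<in> prod_alg (Rset M') {B \<in> alg M'. B \<subseteq> Rset M'}" for S'
    using that prod_alg_subsets_subset[OF M'.A.algebra_axioms M'.Rset_in_alg] by blast
  then show ?thesis
    unfolding is_morphism_def
    using restrR_admissible M'.restrR_admissible assms morphism_image_Rset[OF assms]
      restrR_morphism_preimage[OF assms] restrR_morphism_pair_preimage[OF assms]
    by (auto simp: restrR_def is_morphism_def)
qed

theorem proposition8p11: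
  fixes \<eta> :: real
  assumes "0 \<le> \<eta>" and "\<eta> < 1"
  shows
    "(\<forall>M :: 'a smodel. fib_obj \<eta> M \<longrightarrow> id_obj \<eta> (restrR M) \<and> mu M (Rset M) > 0)
     \<and> (\<forall>(M :: 'a smodel) (M' :: 'b smodel) \<phi>.
          fib_obj \<eta> M \<and> fib_obj \<eta> M' \<and> is_morphism M M' \<phi> \<longrightarrow>
          \<phi> ` Rset M \<subseteq> Rset M' \<and>
          is_morphism (restrR M) (restrR M') (restrict \<phi> (Rset M)))
     \<and> (\<forall>M :: 'a smodel. fib_obj \<eta> M \<longrightarrow>
          restrict (restrict id (carrier M)) (Rset M) = restrict id (carrier (restrR M)))
     \<and> (\<forall>(M :: 'a smodel) (M' :: 'b smodel) (M'' :: 'c smodel) \<phi> \<psi>.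
          fib_obj \<eta> M \<and> fib_obj \<eta> M' \<and> fib_obj \<eta> M'' \<and>
          is_morphism M M' \<phi> \<and> is_morphism M' M'' \<psi> \<longrightarrow>
          restrict (\<psi> \<circ> \<phi>) (Rset M) =
          restrict (restrict \<psi> (Rset M') \<circ> restrict \<phi> (Rset M)) (Rset M))"
proof (intro conjI allI impI)
  fix M :: "'a smodel" assume "fib_obj \<eta> M"
  then interpret admissible_model M by (simp add: fib_obj_def struct_obj_def admissible_model_def)
  show "id_obj \<eta> (restrR M)"
    using restrR_admissible \<open>fib_obj \<eta> M\<close>
    by (simp add: id_obj_def struct_obj_def fib_obj_def restrR_def)
  show "mu M (Rset M) > 0" by (fact mu_Rset_pos)
  show "restrict (restrict id (carrier M)) (Rset M) = restrict id (carrier (restrR M))"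
    using Rset_subset by (auto simp: restrR_def fun_eq_iff)
next
  fix M :: "'a smodel" and M' :: "'b smodel" and \<phi>
  assume "fib_obj \<eta> M \<and> fib_obj \<eta> M' \<and> is_morphism M M' \<phi>"
  then show "\<phi> ` Rset M \<subseteq> Rset M'" "is_morphism (restrR M) (restrR M') (restrict \<phi> (Rset M))"
    using morphism_image_Rset restrR_morphism by blast+
next
  fix M :: "'a smodel" and M' :: "'b smodel" and M'' :: "'c smodel" and \<phi> \<psi>
  assume "fib_obj \<eta> M \<and> fib_obj \<eta> M' \<and> fib_obj \<eta> M'' \<and>
    is_morphism M M' \<phi> \<and> is_morphism M' M'' \<psi>"
  then have "\<phi> ` Rset M \<subseteq> Rset M'" using morphism_image_Rset by blast
  then show "restrict (\<psi> \<circ> \<phi>) (Rset M) =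
      restrict (restrict \<psi> (Rset M') \<circ> restrict \<phi> (Rset M)) (Rset M)"
    by (auto simp: fun_eq_iff)
qed

end
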